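(* Let $\Theta\subseteq\mathbb{R}^d$ be an open set equipped with a Riemannian metric $g$, let $V_1,\dots,V_N:\Theta\to\mathbb{R}$ and $f:\Theta\to\mathbb{R}$ be twice continuously differentiable, and fix $\vec\theta\in\Theta$. Let $C=\mathrm{Con}(\{\mathtt{grad}\,V_i(\vec\theta)\}_{i=1}^N)$ and assume its dual $C^\perp$ is nonempty. Then $\mathtt{grad}\,f(\vec\theta)\notin C$ if and only if there exists a direction $\delta\vec\theta\in\mathbb{R}^d$ such that $\mathscr{V}^i_{f,\delta\vec\theta}(\vec\theta)<0$ for all $i=1,\dots,N$.
   Context: Inner products are $\langle\vec v,\vec w\rangle=g_{ij}(\vec\theta)v^iw^j$ and the gradient is $(\mathtt{grad}\,h)^i=g^{ij}\partial h/\partial\theta^j$ with $g^{ij}$ the inverse of $g_{ij}$. For nonzero vectors $\vec v_1,\dots,\vec v_N$, the conic hull is $\mathrm{Con}(\{\vec v_i\})=\{\sum_i\alpha^i\vec v_i:\alpha^i\ge0\ \forall i\}$, and its dual is $\mathrm{Con}(\{\vec v_i\})^\perp=\{\vec v:\langle\vec v,\vec v_i\rangle<0\text{ for all }i\}$. The differential value to player $i$ of $f$ in direction $\delta\vec\theta$ at $\vec\theta$ is $\mathscr{V}^i_{f,\delta\vec\theta}(\vec\theta)=\dfrac{\langle\mathtt{grad}\,V_i(\vec\theta),\delta\vec\theta\rangle}{\langle\mathtt{grad}\,f(\vec\theta),\delta\vec\theta\rangle}=\dfrac{\partial_kV_i(\vec\theta)\,\delta\theta^k}{\partial_kf(\vec\theta)\,\delta\theta^k}$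 (here $V_i$ is interpreted as the equilibrium expected utility of player $i$ in a game with parameter $\vec\theta$). *)

theory Defs
  imports "HOL-Analysis.Analysis"
begin

definition C2_on :: "(real^'d \<Rightarrow> real) \<Rightarrow> (real^'d) set \<Rightarrow> bool" where
  "C2_on h S \<longleftrightarrow>
     (\<exists>(D1 :: real^'d \<Rightarrow> ((real^'d) \<Rightarrow>\<^sub>L real))
        (D2 :: real^'d \<Rightarrow> ((real^'d) \<Rightarrow>\<^sub>L ((real^'d) \<Rightarrow>\<^sub>L real))).
        (\<forall>x\<in>S. (h has_derivative blinfun_apply (D1 x)) (at x)) \<and>
        (\<forall>x\<in>S. (D1 has_derivative blinfun_apply (D2 x)) (at x)) \<and>
        continuous_on S D2)"

definition riemannian_metric :: "(real^'d \<Rightarrow> real^'d^'d) \<Rightarrow> (real^'d) set \<Rightarrow> bool" where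
  "riemannian_metric g S \<longleftrightarrow>
     continuous_on S g \<and>
     (\<forall>x\<in>S. transpose (g x) = g x \<and> (\<forall>v. v \<noteq> 0 \<longrightarrow> v \<bullet> (g x *v v) > 0))"

definition ginner :: "(real^'d \<Rightarrow> real^'d^'d) \<Rightarrow> real^'d \<Rightarrow> real^'d \<Rightarrow> real^'d \<Rightarrow> real" where
  "ginner g x v w = v \<bullet> (g x *v w)"

definition partials :: "(real^'d \<Rightarrow> real) \<Rightarrow> real^'d \<Rightarrow> real^'d" where
  "partials h x = (THE D. GDERIV h x :> D)"

definition rgrad :: "(real^'d \<Rightarrow> real^'d^'d) \<Rightarrow> (real^'d \<Rightarrow> real) \<Rightarrow> real^'d \<Rightarrow> real^'d" where
  "rgrad g h x = matrix_inv (g x) *v partials h x"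

definition Con :: "nat \<Rightarrow> (nat \<Rightarrow> real^'d) \<Rightarrow> (real^'d) set" where
  "Con N v = {u. \<exists>\<alpha>::nat \<Rightarrow> real. (\<forall>i<N. \<alpha> i \<ge> 0) \<and> u = (\<Sum>i<N. \<alpha> i *\<^sub>R v i)}"

definition Con_dual :: "(real^'d \<Rightarrow> real^'d^'d) \<Rightarrow> real^'d \<Rightarrow> nat \<Rightarrow> (nat \<Rightarrow> real^'d) \<Rightarrow> (real^'d) set" where
  "Con_dual g x N v = {u. \<forall>i<N. ginner g x u (v i) < 0}"

definition diff_value :: "(real^'d \<Rightarrow> real^'d^'d) \<Rightarrow> (real^'d \<Rightarrow> real) \<Rightarrow> (real^'d \<Rightarrow> real)
    \<Rightarrow> real^'d \<Rightarrow> real^'d \<Rightarrow> real" where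
  "diff_value g Vi f d x = ginner g x (rgrad g Vi x) d / ginner g x (rgrad g f x) d"

end

theory Submission
  imports Defs
begin

text \<open>At the point \<open>\<theta>\<close> everything is linear algebra in the inner product
  \<open>\<langle>a, b\<rangle> = a \<bullet> (G *v b)\<close> with \<open>G = g \<theta>\<close>.
  Since \<open>G\<close> is invertible, \<open>d \<mapsto> G *v d\<close> reduces the claim to the Euclidean case, where it
  is a Farkas-type alternative: if \<open>w\<close> lies outside the finitely generated (hence closed)
  cone, a separating \<open>z\<close> has \<open>z \<bullet> w > 0\<close> and \<open>z \<bullet> v i \<le> 0\<close>; adding a small multiple of a
  vector of the dual cone makes the inequalities \<open>z \<bullet> v i < 0\<close> strict. Conversely such a
  \<open>z\<close> is nonpositive on the whole cone. Finally a ratio \<open>(v i \<bullet> z) / (w \<bullet> z)\<close> is negative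
  exactly when numerator and denominator have opposite signs, so replacing \<open>z\<close> by \<open>-z\<close>
  if necessary gives \<open>w \<bullet> z > 0\<close>.\<close>

lemma convex_cone_Con: "convex_cone (Con N v)"
proof -
  have "0 \<in> Con N v"
    unfolding Con_def by (auto intro!: exI[of _ "\<lambda>_. 0"])
  moreover have "convex (Con N v)"
    unfolding convex_def Con_def
  proof clarify
    fix s t :: real and a b :: "nat \<Rightarrow> real"
    assume "0 \<le> s" "0 \<le> t" "\<forall>i<N. 0 \<le> a i" "\<forall>i<N. 0 \<le> b i"
    then show "\<exists>\<alpha>. (\<forall>i<N. 0 \<le> \<alpha> i) \<and>
        s *\<^sub>R (\<Sum>i<N. a i *\<^sub>R v i) + t *\<^sub>R (\<Sum>i<N. b i *\<^sub>R v i) = (\<Sum>i<N. \<alpha> i *\<^sub>R v i)"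
      by (intro exI[of _ "\<lambda>i. s * a i + t * b i"])
         (auto simp: scaleR_sum_right sum.distrib[symmetric] scaleR_add_left)
  qed
  moreover have "conic (Con N v)"
    unfolding conic_def Con_def
  proof clarify
    fix c :: real and a :: "nat \<Rightarrow> real"
    assume "0 \<le> c" "\<forall>i<N. 0 \<le> a i"
    then show "\<exists>\<alpha>. (\<forall>i<N. 0 \<le> \<alpha> i) \<and> c *\<^sub>R (\<Sum>i<N. a i *\<^sub>R v i) = (\<Sum>i<N. \<alpha> i *\<^sub>R v i)"
      by (intro exI[of _ "\<lambda>i. c * a i"]) (auto simp: scaleR_sum_right)
  qed
  ultimately show ?thesis
    by (auto simp: convex_cone_def)
qed

lemma generator_in_Con:
  assumes "i < N"
  shows "v i \<in> Con N v"
proof -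
  have "(\<Sum>j<N. (if j = i then 1 else 0) *\<^sub>R v j) = (\<Sum>j<N. if j = i then v j else 0)"
    by (rule sum.cong) auto
  also have "\<dots> = v i"
    using assms by (simp add: sum.delta')
  finally
  show ?thesis
    unfolding Con_def by (intro CollectI exI[of _ "\<lambda>j. if j = i then 1 else 0"]) auto
qed

lemma separation_from_Con:
  fixes w :: "real^'d"
  assumes "w \<notin> Con N v"
  obtains z where "0 < z \<bullet> w" and "\<And>i. i < N \<Longrightarrow> z \<bullet> v i \<le> 0"
proof -
  let ?H = "convex_cone hull (v ` {..<N})"
  have "?H \<subseteq> Con N v"
    by (rule hull_minimal) (use generator_in_Con convex_cone_Con in auto)
  with assms have "w \<notin> ?H" by blast
  moreover have "closed ?H"
    by (simp add: closed_convex_cone_hull)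
  moreover have "convex ?H"
    using convex_cone_convex_cone_hull unfolding convex_cone_def by blast
  ultimately obtain a b where ab: "a \<bullet> w < b" "\<forall>x\<in>?H. b < a \<bullet> x"
    using separating_hyperplane_closed_point by blast
  have "b < 0"
    using ab(2) convex_cone_hull_contains_0 by fastforce
  have "0 \<le> a \<bullet> v i" if "i < N" for i
  proof (rule ccontr)
    assume neg: "\<not> 0 \<le> a \<bullet> v i"
    define t where "t = b / (a \<bullet> v i)"
    have "0 \<le> t"
      using neg \<open>b < 0\<close> by (simp add: t_def divide_nonpos_neg)
    then have "t *\<^sub>R v i \<in> ?H"
      using that by (intro convex_cone_hull_mul hull_inc) auto
    moreover have "a \<bullet> (t *\<^sub>R v i) = b"
      using neg by (simp add: t_def)
    ultimately show False
      using ab(2) by fastforce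
  qed
  then show ?thesis
    using that[of "-a"] ab(1) \<open>b < 0\<close> by auto
qed

lemma not_in_Con_iff_strictly_separated:
  fixes w :: "real^'d"
  assumes dual: "\<And>i. i < N \<Longrightarrow> v i \<bullet> u < 0"
  shows "w \<notin> Con N v \<longleftrightarrow> (\<exists>z. 0 < w \<bullet> z \<and> (\<forall>i<N. v i \<bullet> z < 0))"
proof
  assume "w \<notin> Con N v"
  then obtain z where z: "0 < z \<bullet> w" "\<And>i. i < N \<Longrightarrow> z \<bullet> v i \<le> 0"
    using separation_from_Con by blast
  define e where "e = (z \<bullet> w) / (2 * (\<bar>w \<bullet> u\<bar> + 1))"
  have "0 < e"
    using z(1) by (simp add: e_def)
  have "e * \<bar>w \<bullet> u\<bar> < z \<bullet> w"
  proof -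
    have "e * \<bar>w \<bullet> u\<bar> \<le> e * (\<bar>w \<bullet> u\<bar> + 1)"
      using \<open>0 < e\<close> by simp
    also have "\<dots> = (z \<bullet> w) / 2"
      by (simp add: e_def field_simps add_pos_nonneg)
    finally show ?thesis
      using z(1) by simp
  qed
  moreover have "- (e * \<bar>w \<bullet> u\<bar>) \<le> e * (w \<bullet> u)"
    using mult_left_mono[OF abs_ge_minus_self[of "w \<bullet> u"], of e] \<open>0 < e\<close> by simp
  moreover have "w \<bullet> (z + e *\<^sub>R u) = z \<bullet> w + e * (w \<bullet> u)"
    by (simp add: inner_add_right inner_commute)
  ultimately have "0 < w \<bullet> (z + e *\<^sub>R u)"
    by linarith
  moreover have "v i \<bullet> (z + e *\<^sub>R u) < 0" if "i < N" for i
    using z(2)[OF that] mult_pos_neg[OF \<open>0 < e\<close> dual[OF that]]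
    by (simp add: inner_add_right inner_commute)
  ultimately show "\<exists>z. 0 < w \<bullet> z \<and> (\<forall>i<N. v i \<bullet> z < 0)"
    by blast
next
  assume "\<exists>z. 0 < w \<bullet> z \<and> (\<forall>i<N. v i \<bullet> z < 0)"
  then obtain z where z: "0 < w \<bullet> z" "\<And>i. i < N \<Longrightarrow> v i \<bullet> z < 0"
    by blast
  show "w \<notin> Con N v"
  proof
    assume "w \<in> Con N v"
    then obtain \<alpha> where \<alpha>: "\<And>i. i < N \<Longrightarrow> 0 \<le> \<alpha> i" "w = (\<Sum>i<N. \<alpha> i *\<^sub>R v i)"
      unfolding Con_def by blast
    have "w \<bullet> z = (\<Sum>i<N. \<alpha> i * (v i \<bullet> z))"
      by (simp add: \<alpha>(2) inner_sum_left)
    also have "\<dots> \<le> 0"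
      using \<alpha>(1) z(2) by (intro sum_nonpos) (simp add: mult_nonneg_nonpos less_imp_le)
    finally show False
      using z(1) by simp
  qed
qed

lemma exists_negative_ratios_iff:
  fixes v :: "nat \<Rightarrow> 'a::real_inner"
  assumes "0 < N"
  shows "(\<exists>z. \<forall>i<N. (v i \<bullet> z) / (w \<bullet> z) < 0) \<longleftrightarrow> (\<exists>z. 0 < w \<bullet> z \<and> (\<forall>i<N. v i \<bullet> z < 0))"
proof
  assume "\<exists>z. \<forall>i<N. (v i \<bullet> z) / (w \<bullet> z) < 0"
  then obtain z where z: "\<And>i. i < N \<Longrightarrow> 0 < v i \<bullet> z \<and> w \<bullet> z < 0 \<or> v i \<bullet> z < 0 \<and> 0 < w \<bullet> z"
    by (auto simp: divide_less_0_iff)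
  show "\<exists>z. 0 < w \<bullet> z \<and> (\<forall>i<N. v i \<bullet> z < 0)"
  proof (cases "0 < w \<bullet> z")
    case True
    then show ?thesis
      using z by force
  next
    case False
    then have "w \<bullet> -z > 0" "\<forall>i<N. v i \<bullet> -z < 0"
      using z[OF assms] z by force+
    then show ?thesis
      by blast
  qed
qed (auto simp: divide_less_0_iff)

lemma inner_matrix_vector_symmetric:
  fixes G :: "real^'n^'n"
  assumes "transpose G = G"
  shows "x \<bullet> (G *v y) = y \<bullet> (G *v x)"
  by (metis assms dot_lmul_matrix inner_commute transpose_matrix_vector)

lemma positive_definite_surj:
  fixes G :: "real^'n^'n"
  assumes "\<And>x. x \<noteq> 0 \<Longrightarrow> 0 < x \<bullet> (G *v x)"
  shows "surj ((*v) G)"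
proof -
  have "\<forall>x. G *v x = 0 \<longrightarrow> x = 0"
    using assms by force
  then obtain B where "B ** G = mat 1"
    using matrix_left_invertible_ker by blast
  then have "G ** B = mat 1"
    using matrix_left_right_inverse by blast
  then show ?thesis
    using matrix_right_invertible_surjective by blast
qed

theorem proposition3:
  fixes \<Theta> :: "(real^'d) set"
    and g :: "real^'d \<Rightarrow> real^'d^'d"
    and V :: "nat \<Rightarrow> real^'d \<Rightarrow> real"
    and f :: "real^'d \<Rightarrow> real"
    and N :: nat
    and \<theta> :: "real^'d"
  assumes "open \<Theta>"
    and "riemannian_metric g \<Theta>"
    and "N \<ge> 1"
    and "\<And>i. i < N \<Longrightarrow> C2_on (V i) \<Theta>"
    and "C2_on f \<Theta>"
    and "\<theta> \<in> \<Theta>"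
    and "Con_dual g \<theta> N (\<lambda>i. rgrad g (V i) \<theta>) \<noteq> {}"
  shows "rgrad g f \<theta> \<notin> Con N (\<lambda>i. rgrad g (V i) \<theta>) \<longleftrightarrow>
         (\<exists>d::real^'d. \<forall>i<N. diff_value g (V i) f d \<theta> < 0)"
proof -
  define G where "G = g \<theta>"
  define v where "v = (\<lambda>i. rgrad g (V i) \<theta>)"
  define w where "w = rgrad g f \<theta>"
  have sym: "transpose G = G" and pos_def: "\<And>x. x \<noteq> 0 \<Longrightarrow> 0 < x \<bullet> (G *v x)"
    using assms(2,6) unfolding riemannian_metric_def G_def by auto
  obtain u where dual: "\<And>i. i < N \<Longrightarrow> v i \<bullet> (G *v u) < 0"
    using assms(7) inner_matrix_vector_symmetric[OF sym]
    unfolding Con_dual_def ginner_def v_def G_def by auto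
  have "w \<notin> Con N v \<longleftrightarrow> (\<exists>z. \<forall>i<N. (v i \<bullet> z) / (w \<bullet> z) < 0)"
    using not_in_Con_iff_strictly_separated[OF dual] exists_negative_ratios_iff[of N v w] assms(3)
    by simp
  also have "\<dots> \<longleftrightarrow> (\<exists>d. \<forall>i<N. (v i \<bullet> (G *v d)) / (w \<bullet> (G *v d)) < 0)"
    using positive_definite_surj[OF pos_def] by (metis surjD)
  finally show ?thesis
    by (simp add: diff_value_def ginner_def v_def w_def G_def)
qed

end
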